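(* For every integer $n\ge1$, with $$S_{n,n}=(-1)^n\sum_{i=0}^n\sum_{p=0}^i(-1)^p\binom{n+1}{i-p}p^n,\qquad C_{n,n}=\sum_{k=1}^n\frac{2^n-2^{n-k}}{k+1}\sum_{t=0}^{k+1}(-1)^t\binom{k+1}{t}t^{n+1},$$ one has $S_{n,n}=C_{n,n}$.
   Context: Convention $0^0=1$. *)

theory Defs
  imports Complex_Main
begin
end

theory Submission
  imports Defs
begin

text \<open>
  Write N = n + 1 and let T(n) be the integer double sum in the statement, so that
  the left-hand side is (-1)^n T(n).  The proof is pure finite-difference calculus:

  \<^item> The basic tool is that the N-th finite difference of a polynomial of degree
    less than N vanishes: \<open>\<Sum>j\<le>N. (-1)^j (N choose j) (j + c)^r = 0\<close> for r < N.
  \<^item> The inner t-sum of the right-hand side equals \<open>-(k + 1) D(n, k)\<close>, where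
    \<open>D(n, k) = \<Sum>s\<le>k. (-1)^s (k choose s) (s + 1)^n\<close>.  Hence the right-hand side is
    \<open>-(2^n \<Sum>k\<le>n. D(n, k) - \<Sum>k\<le>n. 2^(n-k) D(n, k))\<close>.  The first sum vanishes by
    the hockey-stick identity; the second equals -T(n) after swapping the order of
    summation and expressing \<open>\<Sum>k\<le>n. 2^(n-k) (k choose s)\<close> through partial row
    sums of binomial coefficients.  So the right-hand side is -T(n).
  \<^item> For even n, T(n) = 0: T(n) is the lower triangle of a square array whose rows
    all sum to zero, and the reflection (s, j) \<mapsto> (N - s, N - j) maps the lower
    triangle onto the strict upper one without changing the entries.
  For odd n both sides are -T(n), for even n both vanish.
\<close>

section \<open>Finite differences of polynomials\<close>

lemma alternating_binomial_power_sum: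
  fixes c :: "'a :: comm_ring_1"
  assumes "r < N"
  shows "(\<Sum>j\<le>N. (-1) ^ j * of_nat (N choose j) * (of_nat j + c) ^ r) = 0"
  using assms
proof (induction r arbitrary: N c)
  case 0
  then show ?case using choose_alternating_sum[of N, where 'a='a] by simp
next
  case (Suc r)
  then obtain M where N: "N = Suc M" and "r < M" by (cases N) auto
  have shifted: "(\<Sum>i\<le>M. (-1) ^ i * of_nat (M choose i) * (of_nat i + (c + 1)) ^ r) = 0"
    using Suc.IH \<open>r < M\<close> by blast
  have unshifted: "(\<Sum>j\<le>N. (-1) ^ j * of_nat (N choose j) * (of_nat j + c) ^ r) = 0"
    using Suc by simp
  text \<open>Split off one factor j + c: the c-part vanishes by induction, and the j-part is
    absorbed into the binomial coefficient, giving a difference of order M = N - 1.\<close>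
  have "(\<Sum>j\<le>N. (-1) ^ j * of_nat (N choose j) * (of_nat j + c) ^ Suc r)
      = (\<Sum>j\<le>N. (-1) ^ j * of_nat (N choose j) * of_nat j * (of_nat j + c) ^ r)
        + c * (\<Sum>j\<le>N. (-1) ^ j * of_nat (N choose j) * (of_nat j + c) ^ r)"
    by (simp add: sum_distrib_left sum.distrib[symmetric] algebra_simps)
  also have "(\<Sum>j\<le>N. (-1) ^ j * of_nat (N choose j) * of_nat j * (of_nat j + c) ^ r)
      = (\<Sum>i\<le>M. (-1) ^ Suc i * of_nat (N choose Suc i) * of_nat (Suc i) * (of_nat (Suc i) + c) ^ r)"
    unfolding N by (subst sum.atMost_Suc_shift) simp
  also have "\<dots> = - of_nat N * (\<Sum>i\<le>M. (-1) ^ i * of_nat (M choose i) * (of_nat i + (c + 1)) ^ r)"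
    unfolding sum_distrib_left
  proof (rule sum.cong[OF refl])
    fix i
    have absorb: "of_nat (N choose Suc i) * of_nat (Suc i) = (of_nat N * of_nat (M choose i) :: 'a)"
      using Suc_times_binomial[of i M] unfolding N by (metis mult.commute of_nat_mult)
    have "of_nat (Suc i) + c = of_nat i + (c + 1 :: 'a)" by simp
    then show "(-1) ^ Suc i * of_nat (N choose Suc i) * of_nat (Suc i) * (of_nat (Suc i) + c) ^ r
        = - of_nat N * ((-1) ^ i * of_nat (M choose i) * (of_nat i + (c + 1)) ^ r)"
      using absorb by (simp only: mult.assoc power_Suc) (simp add: algebra_simps)
  qed
  finally show ?case using shifted unshifted by simp
qed

section \<open>The left-hand double sum vanishes for even n\<close>

definition tri_sum :: "nat \<Rightarrow> int" where
  "tri_sum n = (\<Sum>i = 0..n. \<Sum>p = 0..i. (-1) ^ p * int ((n + 1) choose (i - p)) * int p ^ n)"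

text \<open>Entries of the square array whose lower triangle (j \<le> s) sums to T(n).\<close>
definition tri_term :: "nat \<Rightarrow> nat \<Rightarrow> nat \<Rightarrow> int" where
  "tri_term n s j = (-1) ^ (s + j) * int (Suc n choose j) * (int s - int j) ^ n"

lemma minus_one_power_parity: "even (a + b) \<Longrightarrow> (-1 :: int) ^ a = (-1) ^ b"
  by (simp add: minus_one_power_iff)

text \<open>Every row of the array sums to zero: it is an (n+1)-st difference of a degree-n
  polynomial.\<close>
lemma tri_term_row_sum: "(\<Sum>j\<le>Suc n. tri_term n s j) = 0"
proof -
  have "(\<Sum>j\<le>Suc n. tri_term n s j) = ((-1) ^ s * (-1) ^ n) *
      (\<Sum>j\<le>Suc n. (-1) ^ j * int (Suc n choose j) * (int j + (- int s)) ^ n)"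
    unfolding sum_distrib_left
  proof (rule sum.cong[OF refl])
    fix j
    have "(int s - int j) ^ n = (-1) ^ n * (int j + (- int s)) ^ n"
      by (metis minus_diff_eq power_minus uminus_add_conv_diff add.commute)
    then show "tri_term n s j
        = ((-1) ^ s * (-1) ^ n) * ((-1) ^ j * int (Suc n choose j) * (int j + (- int s)) ^ n)"
      unfolding tri_term_def by (simp add: power_add ac_simps)
  qed
  also have "\<dots> = 0" using alternating_binomial_power_sum[of n "Suc n" "- int s"] by simp
  finally show ?thesis .
qed

text \<open>Row i of T(n) is row i of the lower triangle (substitute j = i - p); the missing
  row n + 1 sums to zero.\<close>
lemma tri_sum_lower_triangle:
  "tri_sum n = (\<Sum>s\<le>Suc n. \<Sum>j\<le>Suc n. if j \<le> s then tri_term n s j else 0)"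
proof -
  have row: "(\<Sum>p\<le>i. (-1) ^ p * int ((n + 1) choose (i - p)) * int p ^ n)
      = (\<Sum>j\<le>Suc n. if j \<le> i then tri_term n i j else 0)" if "i \<le> Suc n" for i
  proof -
    have "(\<Sum>p\<le>i. (-1) ^ p * int ((n + 1) choose (i - p)) * int p ^ n)
        = (\<Sum>j\<le>i. tri_term n i j)"
    proof (rule sum.reindex_bij_witness[where i="\<lambda>j. i - j" and j="\<lambda>p. i - p"])
      fix p assume p: "p \<in> {..i}"
      then have "(-1 :: int) ^ (i + (i - p)) = (-1) ^ p" by (intro minus_one_power_parity) auto
      moreover have "int i - int (i - p) = int p" using p by auto
      ultimately show "tri_term n i (i - p) = (-1) ^ p * int ((n + 1) choose (i - p)) * int p ^ n"
        unfolding tri_term_def by simp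
    qed auto
    also have "\<dots> = (\<Sum>j\<le>Suc n. if j \<le> i then tri_term n i j else 0)"
    proof -
      have "{j \<in> {..Suc n}. j \<le> i} = {..i}" using that by auto
      then show ?thesis by (metis (no_types) finite_atMost sum.inter_filter)
    qed
    finally show ?thesis .
  qed
  have "tri_sum n = (\<Sum>i\<le>n. \<Sum>j\<le>Suc n. if j \<le> i then tri_term n i j else 0)"
    unfolding tri_sum_def atLeast0AtMost by (rule sum.cong[OF refl], rule row) auto
  also have "\<dots> = (\<Sum>s\<le>Suc n. \<Sum>j\<le>Suc n. if j \<le> s then tri_term n s j else 0)"
    using tri_term_row_sum[of n "Suc n"] by simp
  finally show ?thesis .
qed

lemma tri_term_reflect:
  assumes "even n" "s \<le> Suc n" "j \<le> Suc n"
  shows "tri_term n (Suc n - s) (Suc n - j) = tri_term n s j"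
proof -
  have "(-1 :: int) ^ (Suc n - s + (Suc n - j)) = (-1) ^ (s + j)"
    using assms by (intro minus_one_power_parity) auto
  moreover have "(int (Suc n - s) - int (Suc n - j)) ^ n = (- (int s - int j)) ^ n"
    using assms by simp
  moreover have "(- (int s - int j)) ^ n = (int s - int j) ^ n"
    using assms(1) by (rule power_minus_even)
  moreover have "Suc n choose (Suc n - j) = Suc n choose j"
    using assms by (metis binomial_symmetric)
  ultimately show ?thesis
    unfolding tri_term_def by simp
qed

text \<open>Rows sum to zero, so lower and strict upper triangle cancel; for even n the
  reflection identifies them (the diagonal vanishes), hence both are zero.\<close>
lemma tri_sum_even:
  assumes "n \<ge> 1" "even n"
  shows "tri_sum n = 0"
proof -
  let ?N = "Suc n" and ?Sq = "{..Suc n} \<times> {..Suc n}"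
  let ?lower = "\<Sum>(s, j)\<in>?Sq. if j \<le> s then tri_term n s j else 0"
  let ?upper = "\<Sum>(s, j)\<in>?Sq. if s < j then tri_term n s j else 0"
  have "?lower + ?upper = (\<Sum>(s, j)\<in>?Sq. tri_term n s j)"
    unfolding sum.distrib[symmetric] by (intro sum.cong refl) auto
  also have "\<dots> = 0"
    using tri_term_row_sum by (simp add: sum.cartesian_product[symmetric] del: sum.atMost_Suc)
  finally have total: "?lower + ?upper = 0" .
  have "?upper = (\<Sum>(s, j)\<in>?Sq. if ?N - s < ?N - j then tri_term n (?N - s) (?N - j) else 0)"
    by (rule sum.reindex_bij_witness[where i="\<lambda>(s, j). (?N - s, ?N - j)"
          and j="\<lambda>(s, j). (?N - s, ?N - j)"]) auto
  also have "\<dots> = ?lower"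
  proof -
    have "(if ?N - s < ?N - j then tri_term n (?N - s) (?N - j) else 0)
        = (if j \<le> s then tri_term n s j else 0)" if "s \<le> ?N" "j \<le> ?N" for s j
    proof -
      have "tri_term n s s = 0" using assms(1) unfolding tri_term_def by simp
      then show ?thesis using that tri_term_reflect[OF assms(2)] by (cases "j = s") auto
    qed
    then show ?thesis by (intro sum.cong refl) auto
  qed
  finally have "?lower = 0" using total by simp
  then show ?thesis
    unfolding tri_sum_lower_triangle by (simp add: sum.cartesian_product del: sum.atMost_Suc)
qed

section \<open>The right-hand side\<close>

definition shifted_diff :: "nat \<Rightarrow> nat \<Rightarrow> int" where
  "shifted_diff n k = (\<Sum>s\<le>k. (-1) ^ s * int (k choose s) * (int s + 1) ^ n)"

definition binom_prefix :: "nat \<Rightarrow> nat \<Rightarrow> int" where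
  "binom_prefix m s = (\<Sum>j\<le>s. int (m choose j))"

text \<open>The inner t-sum of the right-hand side, via t (k+1 choose t) = (k+1) (k choose t-1).\<close>
lemma top_difference_eq:
  "(\<Sum>t = 0..k + 1. (-1) ^ t * int ((k + 1) choose t) * int t ^ (n + 1))
    = - (int k + 1) * shifted_diff n k"
proof -
  have "(\<Sum>t = 0..k + 1. (-1) ^ t * int ((k + 1) choose t) * int t ^ (n + 1))
      = (\<Sum>s\<le>k. (-1) ^ Suc s * int (Suc k choose Suc s) * int (Suc s) ^ (n + 1))"
    by (simp add: atLeast0AtMost sum.atMost_Suc_shift del: sum.atMost_Suc)
  also have "\<dots> = (\<Sum>s\<le>k. - (int k + 1) * ((-1) ^ s * int (k choose s) * (int s + 1) ^ n))"
  proof (rule sum.cong[OF refl])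
    fix s
    have absorb: "int (Suc s) * int (Suc k choose Suc s) = (int k + 1) * int (k choose s)"
      using Suc_times_binomial[of s k] by (metis of_nat_Suc of_nat_mult add.commute)
    have "(-1) ^ Suc s * int (Suc k choose Suc s) * int (Suc s) ^ (n + 1)
        = - ((int (Suc s) * int (Suc k choose Suc s)) * ((-1) ^ s * (int s + 1) ^ n))"
      by (simp add: ac_simps)
    then show "(-1) ^ Suc s * int (Suc k choose Suc s) * int (Suc s) ^ (n + 1)
        = - (int k + 1) * ((-1) ^ s * int (k choose s) * (int s + 1) ^ n)"
      unfolding absorb by (simp only: mult_minus_right mult_minus_left) (simp add: ac_simps)
  qed
  also have "\<dots> = - (int k + 1) * shifted_diff n k"
    unfolding shifted_diff_def by (simp add: sum_distrib_left)
  finally show ?thesis .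
qed

lemma shifted_diff_extend:
  "k \<le> n \<Longrightarrow> shifted_diff m k = (\<Sum>s\<le>n. (-1) ^ s * int (k choose s) * (int s + 1) ^ m)"
  unfolding shifted_diff_def by (rule sum.mono_neutral_left) auto

text \<open>Swapping the sums and using the hockey-stick identity turns the total into an
  (n+1)-st difference of x^n.\<close>
lemma sum_shifted_diff:
  assumes "n \<ge> 1"
  shows "(\<Sum>k\<le>n. shifted_diff n k) = 0"
proof -
  have "(\<Sum>k\<le>n. shifted_diff n k) = (\<Sum>k\<le>n. \<Sum>s\<le>n. (-1) ^ s * int (k choose s) * (int s + 1) ^ n)"
    by (intro sum.cong refl shifted_diff_extend) auto
  also have "\<dots> = (\<Sum>s\<le>n. (-1) ^ s * (int s + 1) ^ n * int (\<Sum>k\<le>n. k choose s))"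
    by (subst sum.swap) (simp add: sum_distrib_left sum_distrib_right ac_simps)
  also have "\<dots> = (\<Sum>s\<le>n. (-1) ^ s * (int s + 1) ^ n * int (Suc n choose Suc s))"
    by (simp add: sum_choose_upper)
  also have "\<dots> = - (\<Sum>j\<le>Suc n. (-1) ^ j * int (Suc n choose j) * (int j + 0) ^ n)"
    using assms by (subst sum.atMost_Suc_shift) (simp add: sum_negf[symmetric] ac_simps)
  also have "\<dots> = 0" using alternating_binomial_power_sum[of n "Suc n" "0 :: int"] by simp
  finally show ?thesis .
qed

lemma binom_prefix_0: "binom_prefix 0 s = 1"
  unfolding binom_prefix_def by (induction s) auto

lemma binom_prefix_Suc: "binom_prefix (Suc m) s = 2 * binom_prefix m s - int (m choose s)"
  unfolding binom_prefix_def by (induction s) (auto simp: algebra_simps)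

lemma binom_prefix_full: "binom_prefix m m = 2 ^ m"
  unfolding binom_prefix_def using choose_row_sum[of m] by (metis of_nat_numeral of_nat_power of_nat_sum)

text \<open>Symmetry of Pascal's triangle: complementary prefixes of row n + 1 fill the row.\<close>
lemma binom_prefix_complement:
  assumes "p \<le> n"
  shows "binom_prefix (Suc n) (n - p) + binom_prefix (Suc n) p = 2 ^ Suc n"
proof -
  define m where "m = n - p"
  have n: "Suc n = p + (m + 1)" using assms m_def by simp
  have "binom_prefix (Suc n) m = (\<Sum>j\<le>m. int (Suc n choose (Suc n - j)))"
    unfolding binom_prefix_def
  proof (intro sum.cong refl)
    fix j assume "j \<in> {..m}"
    then have "j \<le> Suc n" using n by auto
    then show "int (Suc n choose j) = int (Suc n choose (Suc n - j))"
      using binomial_symmetric by metis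
  qed
  also have "\<dots> = (\<Sum>i = p + 1..p + (m + 1). int (Suc n choose i))"
    by (rule sum.reindex_bij_witness[where i="\<lambda>i. Suc n - i" and j="\<lambda>j. Suc n - j"]) (auto simp: n)
  finally have upper: "binom_prefix (Suc n) m = (\<Sum>i = p + 1..p + (m + 1). int (Suc n choose i))" .
  have "(2 :: int) ^ Suc n = (\<Sum>i = 0..p + (m + 1). int (Suc n choose i))"
    using binom_prefix_full[of "Suc n"] unfolding binom_prefix_def n atLeast0AtMost by simp
  also have "\<dots> = binom_prefix (Suc n) p + (\<Sum>i = p + 1..p + (m + 1). int (Suc n choose i))"
    unfolding binom_prefix_def atLeast0AtMost[symmetric] by (rule sum.ub_add_nat) simp
  finally show ?thesis using upper unfolding m_def by simp
qed

lemma weighted_column_sum: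
  "(\<Sum>k\<le>n. 2 ^ (n - k) * int (k choose s)) = 2 ^ Suc n - binom_prefix (Suc n) s"
proof (induction n)
  case 0
  then show ?case by (simp add: binom_prefix_Suc binom_prefix_0)
next
  case (Suc n)
  have "(\<Sum>k\<le>n. 2 ^ (Suc n - k) * int (k choose s)) = 2 * (\<Sum>k\<le>n. 2 ^ (n - k) * int (k choose s))"
    unfolding sum_distrib_left by (intro sum.cong refl) (simp add: Suc_diff_le)
  then show ?case
    by (simp add: Suc.IH binom_prefix_Suc[of "Suc n"])
qed

lemma tri_sum_binom_prefix:
  "tri_sum n = (\<Sum>p\<le>n. (-1) ^ p * int p ^ n * binom_prefix (Suc n) (n - p))"
proof -
  let ?g = "\<lambda>p j. (-1) ^ p * int (Suc n choose j) * int p ^ n"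
  have "tri_sum n = (\<Sum>k\<le>n. \<Sum>p\<le>k. ?g p (k - p))"
    unfolding tri_sum_def by (simp add: atLeast0AtMost)
  also have "\<dots> = (\<Sum>(p, j)\<in>{(p, j). p + j \<le> n}. ?g p j)"
    by (rule sum.triangle_reindex_eq[symmetric])
  also have "{(p, j). p + j \<le> n} = (SIGMA p:{..n}. {..n - p})" by auto
  also have "(\<Sum>(p, j)\<in>(SIGMA p:{..n}. {..n - p}). ?g p j) = (\<Sum>p\<le>n. \<Sum>j\<le>n - p. ?g p j)"
    by (rule sum.Sigma[symmetric]) auto
  also have "\<dots> = (\<Sum>p\<le>n. (-1) ^ p * int p ^ n * binom_prefix (Suc n) (n - p))"
    unfolding binom_prefix_def by (simp add: sum_distrib_left sum_distrib_right ac_simps)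
  finally show ?thesis .
qed

lemma weighted_sum_shifted_diff:
  "(\<Sum>k\<le>n. 2 ^ (n - k) * shifted_diff n k)
    = (\<Sum>s\<le>n. (-1) ^ s * (int s + 1) ^ n * (2 ^ Suc n - binom_prefix (Suc n) s))"
proof -
  have "(\<Sum>k\<le>n. 2 ^ (n - k) * shifted_diff n k)
      = (\<Sum>k\<le>n. \<Sum>s\<le>n. 2 ^ (n - k) * ((-1) ^ s * int (k choose s) * (int s + 1) ^ n))"
    by (intro sum.cong refl) (simp add: shifted_diff_extend sum_distrib_left)
  also have "\<dots> = (\<Sum>s\<le>n. (-1) ^ s * (int s + 1) ^ n * (\<Sum>k\<le>n. 2 ^ (n - k) * int (k choose s)))"
    by (subst sum.swap) (simp add: sum_distrib_left sum_distrib_right ac_simps)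
  finally show ?thesis by (simp only: weighted_column_sum)
qed

lemma tri_sum_complement_form:
  "tri_sum n = (\<Sum>p\<le>Suc n. (-1) ^ p * int p ^ n * (2 ^ Suc n - binom_prefix (Suc n) p))"
proof -
  have "tri_sum n = (\<Sum>p\<le>n. (-1) ^ p * int p ^ n * (2 ^ Suc n - binom_prefix (Suc n) p))"
    unfolding tri_sum_binom_prefix
  proof (intro sum.cong refl)
    fix p assume "p \<in> {..n}"
    then have "binom_prefix (Suc n) (n - p) = 2 ^ Suc n - binom_prefix (Suc n) p"
      using binom_prefix_complement[of p n] by simp
    then show "(-1) ^ p * int p ^ n * binom_prefix (Suc n) (n - p)
        = (-1) ^ p * int p ^ n * (2 ^ Suc n - binom_prefix (Suc n) p)" by simp
  qed
  then show ?thesis using binom_prefix_full[of "Suc n"] by simp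
qed

text \<open>Comparing the two expressions: shifting p = s + 1 turns one into minus the other,
  up to an (n+1)-st difference of x^n, which vanishes.\<close>
lemma weighted_sum_shifted_diff_tri_sum:
  assumes "n \<ge> 1"
  shows "(\<Sum>k\<le>n. 2 ^ (n - k) * shifted_diff n k) = - tri_sum n"
proof -
  let ?N = "Suc n"
  let ?tail = "\<lambda>p. 2 ^ ?N - binom_prefix ?N p"
  have "tri_sum n = (\<Sum>p\<le>?N. (-1) ^ p * int p ^ n * (?tail p + int (?N choose p)))
       - (\<Sum>p\<le>?N. (-1) ^ p * int (?N choose p) * (int p + 0) ^ n)"
    unfolding tri_sum_complement_form
    by (simp add: sum_subtractf[symmetric] algebra_simps del: sum.atMost_Suc)
  also have "(\<Sum>p\<le>?N. (-1) ^ p * int (?N choose p) * (int p + 0) ^ n) = 0"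
    using alternating_binomial_power_sum[of n ?N "0 :: int"] by simp
  also have "(\<Sum>p\<le>?N. (-1) ^ p * int p ^ n * (?tail p + int (?N choose p)))
      = (\<Sum>s\<le>n. (-1) ^ Suc s * int (Suc s) ^ n * (?tail (Suc s) + int (?N choose Suc s)))"
    using assms by (subst sum.atMost_Suc_shift) simp
  also have "\<dots> = - (\<Sum>s\<le>n. (-1) ^ s * (int s + 1) ^ n * ?tail s)"
    unfolding sum_negf[symmetric]
  proof (intro sum.cong refl)
    fix s
    have "binom_prefix ?N (Suc s) = binom_prefix ?N s + int (?N choose Suc s)"
      unfolding binom_prefix_def by simp
    then show "(-1) ^ Suc s * int (Suc s) ^ n * (?tail (Suc s) + int (?N choose Suc s))
        = - ((-1) ^ s * (int s + 1) ^ n * ?tail s)"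
      by (simp add: add.commute)
  qed
  finally show ?thesis using weighted_sum_shifted_diff[of n] by simp
qed

lemma rhs_eq_tri_sum:
  assumes "n \<ge> 1"
  shows "(\<Sum>k = 1..n. (2 ^ n - 2 ^ (n - k)) / (of_nat k + 1) *
            (\<Sum>t = 0..k + 1. (-1) ^ t * of_nat ((k + 1) choose t) * of_nat t ^ (n + 1)) :: rat)
      = of_int (- tri_sum n)"
proof -
  have summand: "(2 ^ n - 2 ^ (n - k)) / (of_nat k + 1) *
        (\<Sum>t = 0..k + 1. (-1) ^ t * of_nat ((k + 1) choose t) * of_nat t ^ (n + 1) :: rat)
      = of_int (- ((2 ^ n - 2 ^ (n - k)) * shifted_diff n k))" for k
  proof -
    have "(\<Sum>t = 0..k + 1. (-1) ^ t * of_nat ((k + 1) choose t) * of_nat t ^ (n + 1) :: rat)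
        = of_int (\<Sum>t = 0..k + 1. (-1) ^ t * int ((k + 1) choose t) * int t ^ (n + 1))"
      by simp
    also have "\<dots> = - (of_nat k + 1) * of_int (shifted_diff n k)"
      unfolding top_difference_eq by simp
    finally have inner: "(\<Sum>t = 0..k + 1. (-1) ^ t * of_nat ((k + 1) choose t) * of_nat t ^ (n + 1) :: rat)
        = - (of_nat k + 1) * of_int (shifted_diff n k)" .
    have "(of_nat k + 1 :: rat) \<noteq> 0" by (metis of_nat_Suc of_nat_eq_0_iff add.commute nat.distinct(1))
    then show ?thesis unfolding inner by (simp add: field_simps)
  qed
  have "(\<Sum>k = 1..n. (2 ^ n - 2 ^ (n - k)) * shifted_diff n k)
      = (\<Sum>k\<le>n. (2 ^ n - 2 ^ (n - k)) * shifted_diff n k)"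
    by (simp add: atLeast0AtMost[symmetric] sum.atLeast_Suc_atMost)
  also have "\<dots> = 2 ^ n * (\<Sum>k\<le>n. shifted_diff n k) - (\<Sum>k\<le>n. 2 ^ (n - k) * shifted_diff n k)"
    by (simp add: left_diff_distrib sum_subtractf sum_distrib_left)
  also have "\<dots> = tri_sum n"
    using sum_shifted_diff[OF assms] weighted_sum_shifted_diff_tri_sum[OF assms] by simp
  finally have "(\<Sum>k = 1..n. (2 ^ n - 2 ^ (n - k)) * shifted_diff n k) = tri_sum n" .
  then show ?thesis unfolding summand by (simp only: of_int_sum[symmetric] sum_negf)
qed

theorem mainTheorem14:
  fixes n :: nat
  assumes "n \<ge> 1"
  shows "(of_int ((-1) ^ n * (\<Sum>i = 0..n. \<Sum>p = 0..i.
              (-1) ^ p * int ((n + 1) choose (i - p)) * int p ^ n)) :: rat)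
       = (\<Sum>k = 1..n. (2 ^ n - 2 ^ (n - k)) / (of_nat k + 1) *
              (\<Sum>t = 0..k + 1. (-1) ^ t * of_nat ((k + 1) choose t) * of_nat t ^ (n + 1)))"
proof -
  have "(-1) ^ n * tri_sum n = - tri_sum n"
    using tri_sum_even[OF assms] by (cases "even n") auto
  then show ?thesis
    unfolding rhs_eq_tri_sum[OF assms] tri_sum_def[symmetric] by simp
qed

end
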